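(* Let $n>2k$, $k\ge t+3$, and let $\mathcal F\subseteq\binom{[n]}{k}$ be a maximal $t$-intersecting family with $\tau_t(\mathcal F)=t+2$ and $\tau_t(\mathcal T_t(\mathcal F))=t+1$. Suppose $\mathcal T_t(\mathcal F)=\left\{T\in\binom{M}{t+2}: |T\cap W|\ge t+1\right\}$ for some $M\in\binom{[n]}{k+2}$ and $W\in\binom{M}{t+2}$. Then: (i) $\mathcal F=\{F\in\binom{[n]}{k}: W\subseteq F\}\cup\{F\in\binom{[n]}{k}: |F\cap W|=t+1,\ F\cap(M\setminus W)\neq\emptyset\}\cup\{F\in\binom{M}{k}: |F\cap W|=t\}$ (i.e. $\mathcal F$ is the Type II family determined by some $M\in\binom{[n]}{k+2}$, $W\in\binom{M}{t+2}$); (ii) $|\mathcal F|>((t+2)(k-t)+1)\binom{n-t-2}{k-t-2}-(t+2)(k-t)^2\binom{n-t-3}{k-t-3}$.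
   Context: A family is $t$-intersecting if any two members meet in at least $t$ elements. A $t$-cover of a family $\mathcal G$ of subsets of $[n]$ is a set $S\subseteq[n]$ with $|S\cap G|\ge t$ for all $G\in\mathcal G$; $\tau_t(\mathcal G)$ is the minimum size of a $t$-cover, and $\mathcal T_t(\mathcal G)$ is the set of all $t$-covers of $\mathcal G$ of size $\tau_t(\mathcal G)$. A $t$-intersecting $\mathcal F\subseteq\binom{[n]}{k}$ is maximal if no $t$-intersecting subfamily of $\binom{[n]}{k}$ properly contains it. *)

theory Defs
  imports Main
begin

definition ksubsets :: "nat set \<Rightarrow> nat \<Rightarrow> nat set set" where
  "ksubsets S k = {A. A \<subseteq> S \<and> card A = k}"

definition t_intersecting :: "nat \<Rightarrow> nat set set \<Rightarrow> bool" where
  "t_intersecting t F \<longleftrightarrow> (\<forall>A\<in>F. \<forall>B\<in>F. t \<le> card (A \<inter> B))"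

definition t_cover :: "nat \<Rightarrow> nat \<Rightarrow> nat set set \<Rightarrow> nat set \<Rightarrow> bool" where
  "t_cover n t G S \<longleftrightarrow> S \<subseteq> {1..n} \<and> (\<forall>X\<in>G. t \<le> card (S \<inter> X))"

definition tau :: "nat \<Rightarrow> nat \<Rightarrow> nat set set \<Rightarrow> nat" where
  "tau n t G = (LEAST s. \<exists>S. t_cover n t G S \<and> card S = s)"

definition tcovers_min :: "nat \<Rightarrow> nat \<Rightarrow> nat set set \<Rightarrow> nat set set" where
  "tcovers_min n t G = {S. t_cover n t G S \<and> card S = tau n t G}"

definition maximal_t_intersecting :: "nat \<Rightarrow> nat \<Rightarrow> nat \<Rightarrow> nat set set \<Rightarrow> bool" where
  "maximal_t_intersecting n k t F \<longleftrightarrow>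
     F \<subseteq> ksubsets {1..n} k \<and> t_intersecting t F \<and>
     (\<forall>G. F \<subset> G \<and> G \<subseteq> ksubsets {1..n} k \<longrightarrow> \<not> t_intersecting t G)"

end

theory Submission
  imports Defs
begin

text \<open>
  Let T be the given family of minimal t-covers. W and every exchange W - w + m (w in W,
  m in M - W) lie in T, so every member X of F meets W in at least t points. If it meets W in
  exactly t points it contains M - W, since otherwise some exchange meets X in only t - 1 points;
  by cardinality X then lies inside M. If X meets W in t + 1 points, missing w, but avoids M - W,
  pick y outside M: the (t+2)-set W - w + y is not in T, hence not a t-cover, and a member of F
  witnessing this lies inside M, contains w and meets X in fewer than t points. So F is contained
  in the Type II family, which is t-intersecting, and maximality gives equality.

  For the size, the Type II family contains all k-sets through W, the (t+2)(k-t) C(n-k-2, k-t-2)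
  sets W - w + m + Y with Y outside M, and a k-subset of M meeting W in t points; the bound then
  follows from C(N, r+1) <= C(N-d, r+1) + d C(N-1, r).
\<close>

lemma finite_ksubsets: "finite S \<Longrightarrow> finite (ksubsets S k)"
  unfolding ksubsets_def by (rule finite_subset[of _ "Pow S"]) auto

lemma card_ksubsets: "finite S \<Longrightarrow> card (ksubsets S k) = card S choose k"
  unfolding ksubsets_def by (rule n_subsets)

lemma card_image_Un_ksubsets:
  assumes "finite R" and "A \<inter> R = {}"
  shows "card ((\<union>) A ` ksubsets R r) = card R choose r"
proof -
  have "inj_on ((\<union>) A) (ksubsets R r)"
    using assms(2) by (intro inj_onI) (auto simp: ksubsets_def)
  then show ?thesis
    using assms(1) by (simp add: card_image card_ksubsets)
qed

lemma card_exchange_family: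
  assumes "finite W" "finite D" "finite R" "W \<inter> D = {}" "R \<inter> (W \<union> D) = {}"
  shows "card ((\<lambda>((w, m), Y). insert m (W - {w}) \<union> Y) ` ((W \<times> D) \<times> ksubsets R r))
    = card W * card D * (card R choose r)"
proof -
  have "inj_on (\<lambda>((w, m), Y). insert m (W - {w}) \<union> Y) ((W \<times> D) \<times> ksubsets R r)"
  proof (rule inj_onI, clarsimp)
    have parts: "W - (insert m (W - {w}) \<union> Y) = {w} \<and> (insert m (W - {w}) \<union> Y) \<inter> D = {m}
        \<and> (insert m (W - {w}) \<union> Y) - (W \<union> D) = Y"
      if "w \<in> W" "m \<in> D" "Y \<subseteq> R" for w m Y
      using that assms(4,5) by auto
    fix w m Y w' m' Y'
    assume "w \<in> W" "m \<in> D" "Y \<in> ksubsets R r" "w' \<in> W" "m' \<in> D" "Y' \<in> ksubsets R r"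
      and "insert m (W - {w} \<union> Y) = insert m' (W - {w'} \<union> Y')"
    then show "w = w' \<and> m = m' \<and> Y = Y'"
      using parts[of w m Y] parts[of w' m' Y'] by (auto simp: ksubsets_def)
  qed
  then show ?thesis
    using assms(1-3) by (simp add: card_image card_cartesian_product card_ksubsets)
qed

lemma card_Int_add_card_Int_le:
  assumes "finite W"
  shows "card (A \<inter> W) + card (B \<inter> W) \<le> card W + card (A \<inter> B \<inter> W)"
proof -
  have "card (A \<inter> W) + card (B \<inter> W) = card ((A \<inter> W) \<union> (B \<inter> W)) + card (A \<inter> B \<inter> W)"
    using card_Un_Int[of "A \<inter> W" "B \<inter> W"] assms by (simp add: Int_ac)
  moreover have "card ((A \<inter> W) \<union> (B \<inter> W)) \<le> card W"
    using assms by (intro card_mono) auto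
  ultimately show ?thesis by linarith
qed

lemma choose_le_choose_diff_add:
  "d \<le> N \<Longrightarrow> N choose Suc r \<le> ((N - d) choose Suc r) + d * ((N - 1) choose r)"
proof (induction d)
  case 0
  then show ?case by simp
next
  case (Suc d)
  have "N - d = Suc (N - Suc d)"
    using Suc.prems by simp
  then have "(N - d) choose Suc r = ((N - Suc d) choose r) + ((N - Suc d) choose Suc r)"
    by simp
  moreover have "(N - Suc d) choose r \<le> (N - 1) choose r"
    by (rule binomial_right_mono) simp
  ultimately show ?case
    using Suc by simp
qed

lemma subset_if_exchanges_meet:
  assumes "finite W" and "0 < card (X \<inter> W)"
    and "\<And>w m. w \<in> W \<Longrightarrow> m \<in> D \<Longrightarrow> card (X \<inter> W) \<le> card (insert m (W - {w}) \<inter> X)"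
  shows "D \<subseteq> X"
proof
  fix m
  assume m: "m \<in> D"
  obtain w where w: "w \<in> X \<inter> W"
    using assms(2) by (metis card.empty ex_in_conv less_irrefl)
  show "m \<in> X"
  proof (rule ccontr)
    assume "m \<notin> X"
    then have "insert m (W - {w}) \<inter> X = (X \<inter> W) - {w}"
      by auto
    then have "card (insert m (W - {w}) \<inter> X) < card (X \<inter> W)"
      using w assms(1,2) by (simp add: card_Diff_singleton)
    with assms(3)[of w m] w m show False
      by simp
  qed
qed

lemma tau_zero: "tau n 0 G = 0"
  unfolding tau_def t_cover_def by (rule Least_eq_0) (rule exI[of _ "{}"], simp)

lemma maximal_t_intersecting_eqI:
  assumes "maximal_t_intersecting n k t F" and "F \<subseteq> G"
    and "G \<subseteq> ksubsets {1..n} k" and "t_intersecting t G"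
  shows "F = G"
proof (rule ccontr)
  assume "F \<noteq> G"
  then obtain X where "X \<in> G" "X \<notin> F"
    using assms(2) by blast
  then have "F \<subset> insert X F" and sub: "insert X F \<subseteq> G"
    using assms(2) by auto
  moreover have "insert X F \<subseteq> ksubsets {1..n} k"
    using sub assms(3) by (rule order_trans)
  moreover have "t_intersecting t (insert X F)"
    using assms(4) sub unfolding t_intersecting_def by (meson subsetD)
  ultimately show False
    using assms(1) unfolding maximal_t_intersecting_def by meson
qed

locale type_II_configuration =
  fixes n k t :: nat and M W :: "nat set"
  assumes M_subset: "M \<subseteq> {1..n}" and card_M: "card M = k + 2"
    and W_subset: "W \<subseteq> M" and card_W: "card W = t + 2"
    and k_ge: "t + 2 \<le> k"
begin

definition type_II :: "nat set set" where
  "type_II = {X \<in> ksubsets {1..n} k. W \<subseteq> X}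
    \<union> {X \<in> ksubsets {1..n} k. card (X \<inter> W) = t + 1 \<and> X \<inter> (M - W) \<noteq> {}}
    \<union> {X \<in> ksubsets M k. card (X \<inter> W) = t}"

lemma finite_M: "finite M"
  using M_subset finite_subset by blast

lemma finite_W: "finite W"
  using W_subset finite_M finite_subset by blast

lemma card_M_diff_W: "card (M - W) = k - t"
  using card_Diff_subset[OF finite_W W_subset] card_M card_W by simp

lemma card_Int_W_le: "card (X \<inter> W) \<le> t + 2"
  using card_mono[OF finite_W, of "X \<inter> W"] card_W by simp

lemma card_Int_W_eq_iff: "card (X \<inter> W) = t + 2 \<longleftrightarrow> W \<subseteq> X"
  using card_subset_eq[OF finite_W, of "X \<inter> W"] card_W by (auto simp: Int_absorb1)

lemma subset_M_iff:
  assumes "card X = k" and "card (X \<inter> W) = t"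
  shows "X \<subseteq> M \<longleftrightarrow> M - W \<subseteq> X"
proof -
  have "finite X"
    by (rule card_ge_0_finite) (use assms(1) k_ge in simp)
  then have "card (X - W) = card (M - W)"
    using assms card_M_diff_W by (simp add: card_Diff_subset_Int Int_commute)
  then have "X - W \<subseteq> M - W \<longleftrightarrow> M - W \<subseteq> X - W"
    using \<open>finite X\<close> finite_M by (metis card_subset_eq finite_Diff)
  then show ?thesis
    using W_subset by blast
qed

lemma mem_type_II_iff:
  "X \<in> type_II \<longleftrightarrow> X \<in> ksubsets {1..n} k \<and>
     (card (X \<inter> W) = t + 2 \<or> card (X \<inter> W) = t + 1 \<and> X \<inter> (M - W) \<noteq> {}
      \<or> card (X \<inter> W) = t \<and> M - W \<subseteq> X)"
  using subset_M_iff M_subset card_Int_W_eq_iff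
  by (auto simp: type_II_def ksubsets_def)

lemma type_II_subset: "type_II \<subseteq> ksubsets {1..n} k"
  by (auto simp: mem_type_II_iff)

lemma type_II_card_Int_W_ge: "X \<in> type_II \<Longrightarrow> t \<le> card (X \<inter> W)"
  by (auto simp: mem_type_II_iff)

lemma type_II_Int_ge:
  assumes X: "X \<in> type_II" and Y: "Y \<in> type_II" and le: "card (Y \<inter> W) \<le> card (X \<inter> W)"
  shows "t \<le> card (X \<inter> Y)"
proof -
  have "finite X"
    using X type_II_subset finite_subset[of X "{1..n}"] by (auto simp: ksubsets_def)
  then have fin: "finite (X \<inter> Y)"
    by simp
  have sum_le: "card (X \<inter> W) + card (Y \<inter> W) \<le> t + 2 + card (X \<inter> Y \<inter> W)"
    using card_Int_add_card_Int_le[OF finite_W] card_W by simp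
  consider (full) "card (X \<inter> W) = t + 2"
    | (near) "card (X \<inter> W) = t + 1" "card (Y \<inter> W) = t + 1"
    | (mixed) "card (X \<inter> W) = t + 1" "X \<inter> (M - W) \<noteq> {}" "card (Y \<inter> W) = t" "M - W \<subseteq> Y"
    | (inside) "card (X \<inter> W) = t" "card (Y \<inter> W) = t" "M - W \<subseteq> X" "M - W \<subseteq> Y"
    using X Y le card_Int_W_le[of Y] unfolding mem_type_II_iff by linarith
  then show ?thesis
  proof cases
    case full
    then have "Y \<inter> W \<subseteq> X \<inter> Y"
      using card_Int_W_eq_iff by auto
    then have "card (Y \<inter> W) \<le> card (X \<inter> Y)"
      using fin by (rule card_mono[rotated])
    then show ?thesis
      using type_II_card_Int_W_ge[OF Y] by linarith
  next
    case near
    moreover have "card (X \<inter> Y \<inter> W) \<le> card (X \<inter> Y)"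
      using fin by (intro card_mono) auto
    ultimately show ?thesis
      using sum_le by linarith
  next
    case mixed
    then obtain m where m: "m \<in> X \<inter> Y" "m \<notin> W"
      by blast
    then have "card (insert m (X \<inter> Y \<inter> W)) \<le> card (X \<inter> Y)"
      using fin by (intro card_mono) auto
    moreover have "card (insert m (X \<inter> Y \<inter> W)) = card (X \<inter> Y \<inter> W) + 1"
      using m finite_W by simp
    ultimately show ?thesis
      using mixed sum_le by linarith
  next
    case inside
    then have "card ((M - W) \<union> (X \<inter> Y \<inter> W)) \<le> card (X \<inter> Y)"
      using fin by (intro card_mono) auto
    moreover have "card ((M - W) \<union> (X \<inter> Y \<inter> W)) = (k - t) + card (X \<inter> Y \<inter> W)"
      using card_Un_disjoint[of "M - W" "X \<inter> Y \<inter> W"] finite_M finite_W card_M_diff_W by auto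
    ultimately show ?thesis
      using inside sum_le k_ge by linarith
  qed
qed

lemma t_intersecting_type_II: "t_intersecting t type_II"
  unfolding t_intersecting_def by (metis type_II_Int_ge Int_commute nat_le_linear)

definition supersets_W :: "nat set set" where
  "supersets_W = (\<union>) W ` ksubsets ({1..n} - W) (k - t - 2)"

definition exchanges_W :: "nat set set" where
  "exchanges_W = (\<lambda>((w, m), Y). insert m (W - {w}) \<union> Y)
     ` ((W \<times> (M - W)) \<times> ksubsets ({1..n} - M) (k - t - 2))"

lemma supersets_W_mem: "X \<in> supersets_W \<Longrightarrow> X \<in> ksubsets {1..n} k \<and> card (X \<inter> W) = t + 2"
proof -
  assume "X \<in> supersets_W"
  then obtain Y where Y: "Y \<subseteq> {1..n} - W" "card Y = k - t - 2" and X: "X = W \<union> Y"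
    by (auto simp: supersets_W_def ksubsets_def)
  have "card X = card W + card Y"
    unfolding X using Y(1) finite_W finite_subset[OF Y(1)] by (intro card_Un_disjoint) auto
  then have "card X = k"
    using Y(2) card_W k_ge by simp
  moreover have "X \<subseteq> {1..n}" and "X \<inter> W = W"
    using X Y(1) W_subset M_subset by auto
  ultimately show ?thesis
    using card_W by (simp add: ksubsets_def)
qed

lemma exchanges_W_mem:
  "X \<in> exchanges_W \<Longrightarrow> X \<in> ksubsets {1..n} k \<and> card (X \<inter> W) = t + 1 \<and> X \<inter> (M - W) \<noteq> {}"
proof -
  assume "X \<in> exchanges_W"
  then obtain w m Y where wm: "w \<in> W" "m \<in> M - W" and Y: "Y \<subseteq> {1..n} - M" "card Y = k - t - 2"
    and X: "X = insert m (W - {w}) \<union> Y"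
    by (auto simp: exchanges_W_def ksubsets_def)
  have "card (insert m (W - {w})) = t + 2"
    using wm finite_W card_W by simp
  moreover have "card X = card (insert m (W - {w})) + card Y"
    unfolding X using wm Y(1) W_subset finite_W finite_subset[OF Y(1)] by (intro card_Un_disjoint) auto
  ultimately have "card X = k"
    using Y(2) k_ge by simp
  moreover have "X \<subseteq> {1..n}" and "X \<inter> W = W - {w}" and "m \<in> X \<inter> (M - W)"
    using X wm Y(1) W_subset M_subset by auto
  ultimately show ?thesis
    using wm finite_W card_W by (auto simp: ksubsets_def)
qed

lemma card_supersets_W: "card supersets_W = (n - t - 2) choose (k - t - 2)"
proof -
  have "card ({1..n} - W) = n - t - 2"
    using card_Diff_subset[OF finite_W] W_subset M_subset card_W by auto
  then show ?thesis
    unfolding supersets_W_def by (subst card_image_Un_ksubsets) auto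
qed

lemma card_exchanges_W: "card exchanges_W = (t + 2) * (k - t) * ((n - k - 2) choose (k - t - 2))"
proof -
  have "card ({1..n} - M) = n - k - 2"
    using card_Diff_subset[OF finite_M M_subset] card_M by simp
  then show ?thesis
    unfolding exchanges_W_def using finite_W finite_M W_subset card_W card_M_diff_W
    by (subst card_exchange_family) auto
qed

lemma supersets_W_subset: "supersets_W \<subseteq> type_II"
  using supersets_W_mem by (auto simp: mem_type_II_iff)

lemma exchanges_W_subset: "exchanges_W \<subseteq> type_II"
  using exchanges_W_mem by (auto simp: mem_type_II_iff)

lemma type_II_inside_member:
  obtains X where "X \<in> type_II" and "card (X \<inter> W) = t"
proof -
  obtain D where D: "D \<subseteq> W" "card D = 2"
    using obtain_subset_with_card_n[of 2 W] card_W by auto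
  have finD: "finite D"
    using D(1) finite_W by (rule finite_subset)
  have "(M - D) \<inter> W = W - D"
    using W_subset by auto
  then have "card ((M - D) \<inter> W) = t"
    using D card_W finD by (simp add: card_Diff_subset)
  moreover have "card (M - D) = k"
    using D W_subset card_M finD by (simp add: card_Diff_subset)
  moreover have "M - D \<subseteq> {1..n}" "M - W \<subseteq> M - D"
    using D M_subset by auto
  ultimately show thesis
    using that[of "M - D"] by (simp add: mem_type_II_iff ksubsets_def)
qed

lemma card_type_II_ge: "card supersets_W + card exchanges_W + 1 \<le> card type_II"
proof -
  obtain X0 where X0: "X0 \<in> type_II" "card (X0 \<inter> W) = t"
    by (rule type_II_inside_member)
  have sub: "insert X0 (supersets_W \<union> exchanges_W) \<subseteq> type_II"
    using X0(1) supersets_W_subset exchanges_W_subset by blast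
  have fin: "finite type_II"
    using type_II_subset finite_ksubsets[of "{1..n}" k] finite_subset by blast
  have "supersets_W \<inter> exchanges_W = {}"
  proof (intro equals0I)
    fix X
    assume "X \<in> supersets_W \<inter> exchanges_W"
    then have "card (X \<inter> W) = t + 2" and "card (X \<inter> W) = t + 1"
      using supersets_W_mem exchanges_W_mem by blast+
    then show False
      by simp
  qed
  moreover have "X0 \<notin> supersets_W \<union> exchanges_W"
  proof
    assume "X0 \<in> supersets_W \<union> exchanges_W"
    then have "card (X0 \<inter> W) = t + 2 \<or> card (X0 \<inter> W) = t + 1"
      using supersets_W_mem exchanges_W_mem by blast
    with X0(2) show False
      by simp
  qed
  moreover have "finite supersets_W" and "finite exchanges_W"
    using sub fin by (auto intro: finite_subset)
  ultimately have "card (insert X0 (supersets_W \<union> exchanges_W)) = card supersets_W + card exchanges_W + 1"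
    by (simp add: card_Un_disjoint)
  then show ?thesis
    using card_mono[OF fin sub] by simp
qed

lemma card_type_II_gt:
  assumes "t + 3 \<le> k"
  shows "int (((t + 2) * (k - t) + 1) * ((n - t - 2) choose (k - t - 2)))
      - int ((t + 2) * (k - t)^2 * ((n - t - 3) choose (k - t - 3))) < int (card type_II)"
proof -
  define P B1 B2 B3 where "P = (t + 2) * (k - t)" and "B1 = (n - t - 2) choose (k - t - 2)"
    and "B2 = (n - t - 3) choose (k - t - 3)" and "B3 = (n - k - 2) choose (k - t - 2)"
  have "k + 2 \<le> n"
    using card_mono[OF _ M_subset] card_M by simp
  moreover have eqs: "Suc (k - t - 3) = k - t - 2" "n - t - 2 - (k - t) = n - k - 2"
      "n - t - 2 - 1 = n - t - 3"
    using assms \<open>k + 2 \<le> n\<close> by simp_all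
  ultimately have "B1 \<le> B3 + (k - t) * B2"
    using choose_le_choose_diff_add[of "k - t" "n - t - 2" "k - t - 3"]
    unfolding B1_def B2_def B3_def eqs by simp
  then have "P * B1 \<le> P * (B3 + (k - t) * B2)"
    by (rule mult_le_mono2)
  also have "\<dots> = P * B3 + P * (k - t) * B2"
    by (simp add: algebra_simps)
  finally have "P * B1 \<le> P * B3 + P * (k - t) * B2" .
  moreover have "B1 + P * B3 + 1 \<le> card type_II"
    using card_type_II_ge by (simp add: card_supersets_W card_exchanges_W P_def B1_def B3_def)
  moreover have "(P + 1) * B1 = P * B1 + B1"
    by simp
  ultimately have "int ((P + 1) * B1) - int (P * (k - t) * B2) < int (card type_II)"
    by linarith
  moreover have "(t + 2) * (k - t)^2 = P * (k - t)"
    unfolding P_def power2_eq_square by (rule mult.assoc[symmetric])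
  ultimately show ?thesis
    by (simp only: P_def B1_def B2_def)
qed

end

locale type_II_covers = type_II_configuration +
  fixes F :: "nat set set"
  assumes F_subset: "F \<subseteq> ksubsets {1..n} k"
    and F_t_intersecting: "t_intersecting t F"
    and t_pos: "0 < t"
    and M_psubset: "M \<subset> {1..n}"
    and t_covers_eq:
      "{S. t_cover n t F S \<and> card S = t + 2} = {T \<in> ksubsets M (t + 2). t + 1 \<le> card (T \<inter> W)}"
begin

lemma t_cover_iff:
  assumes "card S = t + 2"
  shows "t_cover n t F S \<longleftrightarrow> S \<subseteq> M \<and> t + 1 \<le> card (S \<inter> W)"
  using eqset_imp_iff[OF t_covers_eq, of S] assms by (simp add: ksubsets_def)

lemma exchange_t_cover:
  assumes "w \<in> W" and "m \<in> M - W"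
  shows "t_cover n t F (insert m (W - {w}))"
proof -
  have "card (insert m (W - {w})) = t + 2" and "insert m (W - {w}) \<inter> W = W - {w}"
    and "insert m (W - {w}) \<subseteq> M"
    using assms W_subset finite_W card_W by auto
  then show ?thesis
    using assms finite_W card_W by (simp add: t_cover_iff)
qed

lemma W_t_cover: "t_cover n t F W"
  using W_subset card_W by (simp add: t_cover_iff)

lemma F_card_Int_W_ge: "X \<in> F \<Longrightarrow> t \<le> card (X \<inter> W)"
  using W_t_cover Int_commute[of X W] by (simp add: t_cover_def)

lemma F_diff_subset:
  assumes "X \<in> F" and "card (X \<inter> W) = t"
  shows "M - W \<subseteq> X"
proof (rule subset_if_exchanges_meet[OF finite_W])
  show "0 < card (X \<inter> W)"
    using assms(2) t_pos by simp
  show "card (X \<inter> W) \<le> card (insert m (W - {w}) \<inter> X)" if "w \<in> W" "m \<in> M - W" for w m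
    using exchange_t_cover[OF that] assms by (simp add: t_cover_def)
qed

lemma F_member_inside_M:
  assumes w: "w \<in> W"
  obtains X' where "X' \<in> F" "w \<in> X'" "card (X' \<inter> W) = t" "X' \<subseteq> M"
proof -
  obtain y where y: "y \<in> {1..n}" "y \<notin> M"
    using M_psubset by blast
  define S where "S = insert y (W - {w})"
  have "y \<notin> W"
    using y W_subset by blast
  then have "card S = t + 2"
    using w finite_W card_W by (simp add: S_def)
  moreover have "S \<subseteq> {1..n}" and "\<not> S \<subseteq> M"
    using y W_subset M_subset by (auto simp: S_def)
  ultimately have "\<not> t_cover n t F S"
    by (simp add: t_cover_iff)
  then obtain X' where X': "X' \<in> F" "card (S \<inter> X') < t"
    using \<open>S \<subseteq> {1..n}\<close> unfolding t_cover_def by (auto simp: not_le)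
  have "card (X' \<inter> (W - {w})) \<le> card (S \<inter> X')"
    using finite_W by (intro card_mono) (auto simp: S_def)
  then have less: "card (X' \<inter> (W - {w})) < t"
    using X'(2) by linarith
  have "w \<in> X'"
  proof (rule ccontr)
    assume "w \<notin> X'"
    then have "X' \<inter> (W - {w}) = X' \<inter> W"
      by auto
    with less F_card_Int_W_ge[OF X'(1)] show False
      by simp
  qed
  then have "X' \<inter> W = insert w (X' \<inter> (W - {w}))"
    using w by auto
  then have "card (X' \<inter> W) = t"
    using less F_card_Int_W_ge[OF X'(1)] finite_W by simp
  moreover have "card X' = k"
    using X'(1) F_subset by (auto simp: ksubsets_def)
  ultimately have "X' \<subseteq> M"
    using F_diff_subset[OF X'(1)] subset_M_iff by blast
  then show thesis
    using that X'(1) \<open>w \<in> X'\<close> \<open>card (X' \<inter> W) = t\<close> by blast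
qed

lemma F_meets_diff:
  assumes X: "X \<in> F" and card_X: "card (X \<inter> W) = t + 1"
  shows "X \<inter> (M - W) \<noteq> {}"
proof
  assume disj: "X \<inter> (M - W) = {}"
  have "card (W - X) = 1"
    using card_Diff_subset_Int[of W X] finite_W card_W card_X by (simp add: Int_commute)
  then obtain w where w: "W - X = {w}"
    by (rule card_1_singletonE)
  then obtain X' where X': "X' \<in> F" "w \<in> X'" "card (X' \<inter> W) = t" "X' \<subseteq> M"
    using F_member_inside_M by blast
  have "X \<inter> X' \<subseteq> (X' \<inter> W) - {w}"
    using disj w X'(4) by blast
  moreover have "card ((X' \<inter> W) - {w}) = t - 1"
  proof -
    have "w \<in> X' \<inter> W"
      using X'(2) w by blast
    then show ?thesis
      using X'(3) by (simp add: card_Diff_singleton)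
  qed
  ultimately have "card (X \<inter> X') \<le> t - 1"
    using finite_W by (metis card_mono finite_Diff finite_Int)
  moreover have "t \<le> card (X \<inter> X')"
    using F_t_intersecting X X'(1) by (simp add: t_intersecting_def)
  ultimately show False
    using t_pos by linarith
qed

lemma F_subset_type_II: "F \<subseteq> type_II"
proof
  fix X
  assume X: "X \<in> F"
  then have "t \<le> card (X \<inter> W)" "card (X \<inter> W) \<le> t + 2"
    using F_card_Int_W_ge card_Int_W_le by blast+
  then consider "card (X \<inter> W) = t + 2" | "card (X \<inter> W) = t + 1" | "card (X \<inter> W) = t"
    by linarith
  then show "X \<in> type_II"
  proof cases
    case 1
    then show ?thesis
      using X F_subset by (auto simp: mem_type_II_iff)
  next
    case 2
    then show ?thesis
      using X F_subset F_meets_diff[OF X] by (auto simp: mem_type_II_iff)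
  next
    case 3
    then show ?thesis
      using X F_subset F_diff_subset[OF X] by (auto simp: mem_type_II_iff)
  qed
qed

end

theorem lemma2p9:
  fixes n k t :: nat and F :: "nat set set" and M W :: "nat set"
  assumes "n > 2 * k" and "k \<ge> t + 3"
    and "maximal_t_intersecting n k t F"
    and "tau n t F = t + 2"
    and "tau n t (tcovers_min n t F) = t + 1"
    and "M \<in> ksubsets {1..n} (k + 2)" and "W \<in> ksubsets M (t + 2)"
    and "tcovers_min n t F = {T \<in> ksubsets M (t + 2). t + 1 \<le> card (T \<inter> W)}"
  shows "(F = {X \<in> ksubsets {1..n} k. W \<subseteq> X}
           \<union> {X \<in> ksubsets {1..n} k. card (X \<inter> W) = t + 1 \<and> X \<inter> (M - W) \<noteq> {}}
           \<union> {X \<in> ksubsets M k. card (X \<inter> W) = t})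
         \<and> int (card F) > int (((t + 2) * (k - t) + 1) * ((n - t - 2) choose (k - t - 2)))
                        - int ((t + 2) * (k - t)^2 * ((n - t - 3) choose (k - t - 3)))"
proof -
  have "0 < t"
    using assms(4) tau_zero[of n F] by (cases t) auto
  have "M \<subset> {1..n}"
    using assms(1,2,6) by (auto simp: ksubsets_def)
  interpret type_II_covers n k t M W F
  proof unfold_locales
    show "{S. t_cover n t F S \<and> card S = t + 2} = {T \<in> ksubsets M (t + 2). t + 1 \<le> card (T \<inter> W)}"
      using assms(4,8) by (simp add: tcovers_min_def)
  qed (use assms(2,3,6,7) \<open>0 < t\<close> \<open>M \<subset> {1..n}\<close> in \<open>auto simp: ksubsets_def maximal_t_intersecting_def\<close>)
  have "F = type_II"
    using assms(3) F_subset_type_II type_II_subset t_intersecting_type_II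
    by (rule maximal_t_intersecting_eqI)
  then show ?thesis
    using card_type_II_gt assms(2) by (simp add: type_II_def)
qed

end
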